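(* Let $w\in\mathbb{R}^n$ have positive entries with $\max_{i,j}w_i/w_j\le b$, let $\widehat W\in\mathbb{R}^n$ have positive entries, set $\rho_{ij}=w_i/w_j$, and let $s_{ij}\ge0$ ($i,j=1,\dots,n$) be such that $$\left[\frac{\widehat W_i}{\widehat W_j}-\rho_{ij}\right]^2\le\rho_{ij}^2\,s_{ij}\quad\text{for all }i,j.$$ Then for every $\ell\in\{1,\dots,n\}$, $\sin(w,\widehat W)^2\le\max_j s_{j\ell}$, and moreover $\sin(w,\widehat W)^2\le b^2 s_{\rm avg}$, where $s_{\rm avg}=\frac1{n^2}\sum_{a,c=1}^n s_{ac}$.
   Context: $\sin(x,y)$ denotes the sine of the angle between nonzero vectors $x,y\in\mathbb{R}^n$. *)

theory Defs
  imports "HOL-Analysis.Analysis"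
begin

definition vec_angle :: "'a::real_inner \<Rightarrow> 'a \<Rightarrow> real" where
  "vec_angle x y = arccos ((x \<bullet> y) / (norm x * norm y))"

definition vec_sin :: "'a::real_inner \<Rightarrow> 'a \<Rightarrow> real" where
  "vec_sin x y = sin (vec_angle x y)"

end

theory Submission
  imports Defs
begin

text \<open>The squared sine of the angle between \<open>w\<close> and \<open>W\<close> times \<open>\<parallel>w\<parallel>\<^sup>2\<close> is the squared
distance from \<open>w\<close> to the line through \<open>W\<close>, hence at most \<open>\<parallel>w - t W\<parallel>\<^sup>2\<close> for every \<open>t\<close>.
Choosing \<open>t = w\<^sub>l / W\<^sub>l\<close> makes the \<open>i\<close>-th coordinate of \<open>w - t W\<close> equal to
\<open>w\<^sub>l (W\<^sub>i/W\<^sub>l - \<rho>\<^sub>i\<^sub>l)\<close>, so the hypothesis bounds \<open>\<parallel>w - t W\<parallel>\<^sup>2\<close> by \<open>\<Sum>\<^sub>i w\<^sub>i\<^sup>2 s\<^sub>i\<^sub>l\<close>.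
This weighted column average of \<open>s\<close> is at most the column maximum; averaging it over \<open>l\<close>
and using \<open>w\<^sub>i\<^sup>2 \<le> b\<^sup>2 \<parallel>w\<parallel>\<^sup>2 / n\<close> gives the bound by \<open>b\<^sup>2 s\<^sub>a\<^sub>v\<^sub>g\<close>.\<close>

lemma vec_sin_power2:
  fixes x y :: "'a::real_inner"
  assumes "x \<noteq> 0" "y \<noteq> 0"
  shows "(vec_sin x y)\<^sup>2 = 1 - ((x \<bullet> y) / (norm x * norm y))\<^sup>2"
proof -
  define c where "c = (x \<bullet> y) / (norm x * norm y)"
  have "\<bar>x \<bullet> y\<bar> \<le> norm x * norm y" by (rule Cauchy_Schwarz_ineq2)
  then have "\<bar>c\<bar> \<le> 1"
    using assms unfolding c_def by (simp add: abs_divide divide_le_eq_1)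
  then have "-1 \<le> c" "c \<le> 1" by auto
  then show ?thesis
    unfolding vec_sin_def vec_angle_def c_def[symmetric] by (simp add: sin_arccos abs_square_le_1)
qed

lemma vec_sin_power2_mult_norm_le:
  fixes x y :: "'a::real_inner"
  assumes "x \<noteq> 0" "y \<noteq> 0"
  shows "(vec_sin x y)\<^sup>2 * (norm x)\<^sup>2 \<le> (norm (x - t *\<^sub>R y))\<^sup>2"
proof -
  have ny: "norm y > 0" using assms by simp
  have "(vec_sin x y)\<^sup>2 * (norm x)\<^sup>2 = (norm x)\<^sup>2 - (x \<bullet> y)\<^sup>2 / (norm y)\<^sup>2"
    unfolding vec_sin_power2[OF assms] using assms by (simp add: field_simps power2_eq_square)
  also have "\<dots> \<le> (norm x)\<^sup>2 - (x \<bullet> y)\<^sup>2 / (norm y)\<^sup>2 + (t * (norm y)\<^sup>2 - x \<bullet> y)\<^sup>2 / (norm y)\<^sup>2"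
    by simp
  also have "\<dots> = (norm x)\<^sup>2 - 2 * t * (x \<bullet> y) + t\<^sup>2 * (norm y)\<^sup>2"
    using ny by (simp add: field_simps power2_eq_square)
  also have "\<dots> = (norm (x - t *\<^sub>R y))\<^sup>2"
    unfolding power2_norm_eq_inner
    by (simp add: inner_diff_left inner_diff_right inner_commute algebra_simps power2_eq_square)
  finally show ?thesis .
qed

lemma norm_power2_vec_eq_sum: "(norm (v :: real ^ 'n))\<^sup>2 = (\<Sum>i\<in>UNIV. (v $ i)\<^sup>2)"
  unfolding power2_norm_eq_inner inner_vec_def by (simp add: power2_eq_square)

lemma vec_sin_power2_mult_norm_le_column:
  fixes w W :: "real ^ 'n" and s :: "'n \<Rightarrow> real"
  assumes "w \<noteq> 0" "W \<noteq> 0" "w $ l \<noteq> 0" "W $ l \<noteq> 0"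
    and hyp: "\<And>i. (W $ i / W $ l - w $ i / w $ l)\<^sup>2 \<le> (w $ i / w $ l)\<^sup>2 * s i"
  shows "(vec_sin w W)\<^sup>2 * (norm w)\<^sup>2 \<le> (\<Sum>i\<in>UNIV. (w $ i)\<^sup>2 * s i)"
proof -
  have "(vec_sin w W)\<^sup>2 * (norm w)\<^sup>2 \<le> (norm (w - (w $ l / W $ l) *\<^sub>R W))\<^sup>2"
    using assms(1,2) by (rule vec_sin_power2_mult_norm_le)
  also have "\<dots> = (\<Sum>i\<in>UNIV. (w $ l)\<^sup>2 * (W $ i / W $ l - w $ i / w $ l)\<^sup>2)"
    unfolding norm_power2_vec_eq_sum
    using assms(3,4) by (intro sum.cong) (simp_all add: field_simps power2_eq_square)
  also have "\<dots> \<le> (\<Sum>i\<in>UNIV. (w $ l)\<^sup>2 * ((w $ i / w $ l)\<^sup>2 * s i))"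
    by (intro sum_mono mult_left_mono hyp) simp
  also have "\<dots> = (\<Sum>i\<in>UNIV. (w $ i)\<^sup>2 * s i)"
    using assms(3) by (simp add: field_simps power2_eq_square)
  finally show ?thesis .
qed

lemma vec_sin_power2_le_Max_column:
  fixes w W :: "real ^ 'n" and s :: "'n \<Rightarrow> real"
  assumes "w \<noteq> 0" "W \<noteq> 0" "w $ l \<noteq> 0" "W $ l \<noteq> 0"
    and "\<And>i. (W $ i / W $ l - w $ i / w $ l)\<^sup>2 \<le> (w $ i / w $ l)\<^sup>2 * s i"
  shows "(vec_sin w W)\<^sup>2 \<le> (MAX i. s i)"
proof -
  have "(vec_sin w W)\<^sup>2 * (norm w)\<^sup>2 \<le> (\<Sum>i\<in>UNIV. (w $ i)\<^sup>2 * s i)"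
    using assms by (rule vec_sin_power2_mult_norm_le_column)
  also have "\<dots> \<le> (\<Sum>i\<in>UNIV. (w $ i)\<^sup>2 * (MAX j. s j))"
    by (intro sum_mono mult_left_mono) auto
  also have "\<dots> = (MAX j. s j) * (norm w)\<^sup>2"
    unfolding norm_power2_vec_eq_sum by (simp add: sum_distrib_left mult.commute)
  finally show ?thesis using assms(1) by simp
qed

lemma component_power2_le_of_ratio_bound:
  fixes w :: "real ^ 'n"
  assumes "\<And>i. w $ i > 0" and "\<And>i j. w $ i / w $ j \<le> b"
  shows "(w $ i)\<^sup>2 \<le> b\<^sup>2 * (norm w)\<^sup>2 / real CARD('n)"
proof -
  have "(w $ i)\<^sup>2 \<le> b\<^sup>2 * (w $ j)\<^sup>2" for j
  proof -
    have "w $ i \<le> b * w $ j" using assms(2)[of i j] assms(1)[of j] by (simp add: divide_le_eq)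
    with assms(1)[of i] have "(w $ i)\<^sup>2 \<le> (b * w $ j)\<^sup>2" by (intro power_mono) simp_all
    then show ?thesis by (simp add: power_mult_distrib)
  qed
  then have "(\<Sum>j\<in>(UNIV::'n set). (w $ i)\<^sup>2) \<le> (\<Sum>j\<in>UNIV. b\<^sup>2 * (w $ j)\<^sup>2)"
    by (rule sum_mono)
  then show ?thesis
    unfolding norm_power2_vec_eq_sum by (simp add: sum_distrib_left le_divide_eq mult.commute)
qed

lemma vec_sin_power2_le_average:
  fixes w W :: "real ^ 'n" and s :: "'n \<Rightarrow> 'n \<Rightarrow> real"
  assumes "w \<noteq> 0" and snonneg: "\<And>i l. s i l \<ge> 0"
    and column: "\<And>l. (vec_sin w W)\<^sup>2 * (norm w)\<^sup>2 \<le> (\<Sum>i\<in>UNIV. (w $ i)\<^sup>2 * s i l)"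
    and component: "\<And>i. (w $ i)\<^sup>2 \<le> B * (norm w)\<^sup>2 / real CARD('n)"
  shows "(vec_sin w W)\<^sup>2 \<le> B * ((1 / (real CARD('n))\<^sup>2) * (\<Sum>a\<in>UNIV. \<Sum>c\<in>UNIV. s a c))"
proof -
  define n where "n = real CARD('n)"
  have n_pos: "n > 0" unfolding n_def by simp
  have "(vec_sin w W)\<^sup>2 * (norm w)\<^sup>2 * n = (\<Sum>l\<in>(UNIV::'n set). (vec_sin w W)\<^sup>2 * (norm w)\<^sup>2)"
    unfolding n_def by simp
  also have "\<dots> \<le> (\<Sum>l\<in>UNIV. \<Sum>i\<in>UNIV. (w $ i)\<^sup>2 * s i l)"
    by (intro sum_mono column)
  also have "\<dots> = (\<Sum>i\<in>UNIV. \<Sum>l\<in>UNIV. (w $ i)\<^sup>2 * s i l)"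
    by (rule sum.swap)
  also have "\<dots> \<le> (\<Sum>i\<in>UNIV. \<Sum>l\<in>UNIV. B * (norm w)\<^sup>2 / n * s i l)"
    unfolding n_def by (intro sum_mono mult_right_mono component snonneg)
  also have "\<dots> = B * (norm w)\<^sup>2 / n * (\<Sum>a\<in>UNIV. \<Sum>c\<in>UNIV. s a c)"
    by (simp add: sum_distrib_left)
  finally have "(vec_sin w W)\<^sup>2 * n * n \<le> B * (\<Sum>a\<in>UNIV. \<Sum>c\<in>UNIV. s a c)"
    using assms(1) n_pos by (simp add: field_simps)
  then show ?thesis
    unfolding n_def[symmetric] using n_pos by (simp add: field_simps power2_eq_square)
qed

theorem lemma7:
  fixes w W :: "real ^ 'n" and b :: real and s :: "'n \<Rightarrow> 'n \<Rightarrow> real"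
  assumes wpos: "\<And>i. w $ i > 0"
    and bbound: "\<And>i j. w $ i / w $ j \<le> b"
    and Wpos: "\<And>i. W $ i > 0"
    and snonneg: "\<And>i j. s i j \<ge> 0"
    and hyp: "\<And>i j. (W $ i / W $ j - w $ i / w $ j)\<^sup>2 \<le> (w $ i / w $ j)\<^sup>2 * s i j"
  shows "(\<forall>l. (vec_sin w W)\<^sup>2 \<le> (MAX j. s j l))
    \<and> (vec_sin w W)\<^sup>2 \<le> b\<^sup>2 * ((1 / (real CARD('n))\<^sup>2) * (\<Sum>a\<in>UNIV. \<Sum>c\<in>UNIV. s a c))"
proof -
  have nonzero: "w \<noteq> 0" "W \<noteq> 0" "w $ l \<noteq> 0" "W $ l \<noteq> 0" for l
    using wpos[of l] Wpos[of l] by auto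
  show ?thesis
  proof (intro conjI allI)
    fix l
    show "(vec_sin w W)\<^sup>2 \<le> (MAX j. s j l)"
      using nonzero hyp by (rule vec_sin_power2_le_Max_column)
  next
    show "(vec_sin w W)\<^sup>2 \<le> b\<^sup>2 * ((1 / (real CARD('n))\<^sup>2) * (\<Sum>a\<in>UNIV. \<Sum>c\<in>UNIV. s a c))"
      using nonzero(1) snonneg
    proof (rule vec_sin_power2_le_average)
      show "(vec_sin w W)\<^sup>2 * (norm w)\<^sup>2 \<le> (\<Sum>i\<in>UNIV. (w $ i)\<^sup>2 * s i l)" for l
        using nonzero hyp by (rule vec_sin_power2_mult_norm_le_column)
      show "(w $ i)\<^sup>2 \<le> b\<^sup>2 * (norm w)\<^sup>2 / real CARD('n)" for i
        using wpos bbound by (rule component_power2_le_of_ratio_bound)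
    qed
  qed
qed

end
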